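(* Let $A$ be a flat layout and $N$ a positive integer. There exists an $N$-complement of $A$ if and only if $A$ is $N$-complementable.
   Context: A flat layout $L=(s_1,\dots,s_m):(d_1,\dots,d_m)$ has positive integer shape entries and nonnegative integer stride entries; $\mathrm{size}(L)=\prod s_i$, $\mathrm{cosize}(L)=1+\sum(s_i-1)d_i$; layout function $\Phi_L(x)=\sum x_id_i$, $x_i=\lfloor x/(s_1\cdots s_{i-1})\rfloor\bmod s_i$, on $[0,\mathrm{size}(L))$. $L$ is compact if $\Phi_L:[0,\mathrm{size}(L))\to[0,\mathrm{cosize}(L))$ is bijective. $A\star B$ denotes concatenation of shapes and of strides. A flat layout $B$ is an $N$-complement of $A$ if $A\star B$ is compact and $\mathrm{size}(A)\cdot\mathrm{size}(B)=N$. $\mathrm{squeeze}$ removes modes with $s_i=1$; $\mathrm{sort}$ stably reorders modes into nondecreasing order for $s:d\preceq s':d'$ iff $d<d'$ or ($d=d'$, $s\le s'$). $A$ is $N$-complementable if, writing $\mathrm{sort}(\mathrm{squeeze}(A))=(s_1,\dots,s_m):(d_1,\dots,d_m)$, $s_id_i\mid d_{i+1}$ for all $1\le i<m$ and $s_md_m\mid N$. *)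

theory Defs
  imports Main "HOL-Library.Product_Lexorder"
begin

text \<open>A flat layout (s_1,...,s_m):(d_1,...,d_m) is represented as the list of
  modes [(s_1,d_1),...,(s_m,d_m)] :: (nat \<times> nat) list (shape, stride).\<close>

type_synonym layout = "(nat \<times> nat) list"

definition flat_layout :: "layout \<Rightarrow> bool" where
  "flat_layout L \<longleftrightarrow> (\<forall>m\<in>set L. fst m > 0)"

definition shapes :: "layout \<Rightarrow> nat list" where
  "shapes L = map fst L"

definition strides :: "layout \<Rightarrow> nat list" where
  "strides L = map snd L"

definition lsize :: "layout \<Rightarrow> nat" where
  "lsize L = prod_list (shapes L)"

definition lcosize :: "layout \<Rightarrow> nat" where
  "lcosize L = 1 + (\<Sum>i<length L. (shapes L ! i - 1) * strides L ! i)"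

definition coord :: "layout \<Rightarrow> nat \<Rightarrow> nat \<Rightarrow> nat" where
  "coord L x i = (x div prod_list (take i (shapes L))) mod (shapes L ! i)"

definition layout_fun :: "layout \<Rightarrow> nat \<Rightarrow> nat" where
  "layout_fun L x = (\<Sum>i<length L. coord L x i * strides L ! i)"

definition compact :: "layout \<Rightarrow> bool" where
  "compact L \<longleftrightarrow> bij_betw (layout_fun L) {0..<lsize L} {0..<lcosize L}"

definition concat_layout :: "layout \<Rightarrow> layout \<Rightarrow> layout" where
  "concat_layout A B = A @ B"

definition is_complement :: "nat \<Rightarrow> layout \<Rightarrow> layout \<Rightarrow> bool" where
  "is_complement N A B \<longleftrightarrow> flat_layout B \<and> compact (concat_layout A B)
     \<and> lsize A * lsize B = N"

definition squeeze :: "layout \<Rightarrow> layout" where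
  "squeeze L = filter (\<lambda>m. fst m \<noteq> 1) L"

text \<open>Stable sort w.r.t. s:d \<preceq> s':d' iff d < d' or (d = d' and s \<le> s'),
  i.e. lexicographic order on (d, s).\<close>
definition sort_layout :: "layout \<Rightarrow> layout" where
  "sort_layout L = sort_key (\<lambda>(s, d). (d, s)) L"

definition complementable :: "nat \<Rightarrow> layout \<Rightarrow> bool" where
  "complementable N A \<longleftrightarrow>
     (let L = sort_layout (squeeze A); m = length L in
       (\<forall>i. i + 1 < m \<longrightarrow> fst (L ! i) * snd (L ! i) dvd snd (L ! (i + 1))) \<and>
       (m > 0 \<longrightarrow> fst (L ! (m - 1)) * snd (L ! (m - 1)) dvd N))"

end

theory Submission
  imports Defs "HOL-Library.Multiset" "HOL-Library.Set_Algebras"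
begin

(* The image of the layout function of L is the Minkowski sum of the cells {a d | a < s} of its
   modes (s, d). So L is compact iff this sum is direct (it has size(L) elements) and equals
   [0, cosize(L)); both conditions are invariant under permuting the modes and under dropping
   modes of shape 1.

   A compact layout without modes of shape 1 is a permutation of a column-major layout
   (s_1, ..., s_k) : (1, s_1, s_1 s_2, ...). Indeed, offset 1 forces a mode (s_1, 1); offset s_1
   then forces a mode of stride at most s_1, and a stride below s_1 would make two offsets
   collide; finally (s_1, 1) and (s_2, s_1) merge into the single mode (s_1 s_2, 1), which
   preserves compactness and allows induction on the number of modes.

   If A \<star> B is compact, the modes of sort(squeeze(A)) therefore occur, in increasing order of
   stride, in a column-major layout of size N, which is the divisibility chain defining
   N-complementability. Conversely, given the chain, inserting the gap modes
   d_(i+1) / (s_i d_i) : s_i d_i between consecutive modes yields a column-major, hence compact,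
   layout of size N, so the gap modes form an N-complement. *)

lemma image_add_mult_lessThan:
  fixes s :: nat
  assumes "0 < s"
  shows "(\<lambda>(a, y). a + s * y) ` ({..<s} \<times> {..<n}) = {..<s * n}"
proof (intro equalityI subsetI)
  fix x assume "x \<in> (\<lambda>(a, y). a + s * y) ` ({..<s} \<times> {..<n})"
  then obtain a y where "a < s" "y < n" "x = a + s * y" by auto
  then have "x < s * Suc y" by simp
  also have "s * Suc y \<le> s * n" using \<open>y < n\<close> by (intro mult_le_mono2) simp
  finally show "x \<in> {..<s * n}" by simp
next
  fix x assume "x \<in> {..<s * n}"
  then have "x mod s < s" "x div s < n" "x = x mod s + s * (x div s)"
    using assms by (simp_all add: div_less_iff_less_mult mult.commute)
  then show "x \<in> (\<lambda>(a, y). a + s * y) ` ({..<s} \<times> {..<n})"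
    by (intro image_eqI[of _ _ "(x mod s, x div s)"]) simp_all
qed

lemma card_set_plus_le:
  fixes A B :: "'a::plus set"
  assumes "finite A" "finite B"
  shows "card (A + B) \<le> card A * card B"
  unfolding set_plus_image card_cartesian_product[symmetric] by (rule card_image_le) (simp add: assms)

lemma sum_list_map_mset_eq:
  fixes f :: "'a \<Rightarrow> 'b::comm_monoid_add"
  assumes "mset xs = mset ys"
  shows "(\<Sum>x\<leftarrow>xs. f x) = (\<Sum>x\<leftarrow>ys. f x)"
proof -
  have "mset (map f xs) = mset (map f ys)"
    using assms by simp
  then show ?thesis
    by (metis sum_mset_sum_list)
qed

lemma prod_list_map_mset_eq:
  fixes f :: "'a \<Rightarrow> 'b::comm_monoid_mult"
  assumes "mset xs = mset ys"
  shows "(\<Prod>x\<leftarrow>xs. f x) = (\<Prod>x\<leftarrow>ys. f x)"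
proof -
  have "mset (map f xs) = mset (map f ys)"
    using assms by simp
  then show ?thesis
    by (metis prod_mset_prod_list)
qed

section \<open>Offsets and compactness\<close>

lemma flat_layout_Cons [simp]: "flat_layout (m # L) \<longleftrightarrow> 0 < fst m \<and> flat_layout L"
  by (simp add: flat_layout_def)

lemma flat_layout_append [simp]: "flat_layout (xs @ ys) \<longleftrightarrow> flat_layout xs \<and> flat_layout ys"
  by (auto simp: flat_layout_def)

lemma flat_layout_squeeze: "flat_layout L \<Longrightarrow> flat_layout (squeeze L)"
  by (simp add: flat_layout_def squeeze_def)

lemma lsize_Nil [simp]: "lsize [] = 1"
  by (simp add: lsize_def shapes_def)

lemma lsize_Cons [simp]: "lsize (m # L) = fst m * lsize L"
  by (simp add: lsize_def shapes_def)

lemma lsize_append: "lsize (xs @ ys) = lsize xs * lsize ys"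
  by (simp add: lsize_def shapes_def)

lemma lsize_mset: "mset xs = mset ys \<Longrightarrow> lsize xs = lsize ys"
  unfolding lsize_def shapes_def by (rule prod_list_map_mset_eq)

lemma lsize_squeeze: "lsize (squeeze L) = lsize L"
  by (induction L) (auto simp: squeeze_def)

lemma lsize_pos: "flat_layout L \<Longrightarrow> 0 < lsize L"
  by (induction L) (simp_all add: flat_layout_def)

lemma lcosize_eq: "lcosize L = 1 + (\<Sum>m\<leftarrow>L. (fst m - 1) * snd m)"
  unfolding lcosize_def shapes_def strides_def
  by (simp add: sum_list_sum_nth atLeast0LessThan)

lemma lcosize_Nil [simp]: "lcosize [] = 1"
  by (simp add: lcosize_eq)

lemma lcosize_Cons [simp]: "lcosize (m # L) = (fst m - 1) * snd m + lcosize L"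
  by (simp add: lcosize_eq)

lemma lcosize_mset: "mset xs = mset ys \<Longrightarrow> lcosize xs = lcosize ys"
  unfolding lcosize_eq by (metis sum_list_map_mset_eq)

lemma lcosize_squeeze: "lcosize (squeeze L) = lcosize L"
  by (induction L) (auto simp: squeeze_def)

definition cell :: "nat \<times> nat \<Rightarrow> nat set" where
  "cell m = (\<lambda>a. a * snd m) ` {..<fst m}"

definition offsets :: "layout \<Rightarrow> nat set" where
  "offsets L = (\<Sum>m\<leftarrow>L. cell m)"

lemma offsets_Nil [simp]: "offsets [] = {0}"
  by (simp add: offsets_def)

lemma offsets_Cons [simp]: "offsets (m # L) = cell m + offsets L"
  by (simp add: offsets_def)

lemma offsets_append: "offsets (xs @ ys) = offsets xs + offsets ys"
  by (simp add: offsets_def)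

lemma offsets_mset: "mset xs = mset ys \<Longrightarrow> offsets xs = offsets ys"
  unfolding offsets_def by (rule sum_list_map_mset_eq)

lemma offsets_squeeze: "offsets (squeeze L) = offsets L"
proof (induction L)
  case (Cons m L)
  then show ?case
    by (cases "fst m = 1") (auto simp: squeeze_def cell_def lessThan_Suc)
qed (simp add: squeeze_def)

lemma finite_offsets [simp]: "finite (offsets L)"
  by (induction L) (simp_all add: cell_def finite_set_plus)

lemma card_cell_le: "card (cell m) \<le> fst m"
  unfolding cell_def using card_image_le[of "{..<fst m}"] by simp

lemma card_offsets_le: "card (offsets L) \<le> lsize L"
proof (induction L)
  case (Cons m L)
  have "card (offsets (m # L)) \<le> card (cell m) * card (offsets L)"
    by (simp add: card_set_plus_le cell_def)
  also have "\<dots> \<le> lsize (m # L)"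
    using Cons.IH card_cell_le by (simp add: mult_le_mono)
  finally show ?case .
qed simp

lemma layout_fun_Cons:
  "layout_fun (m # L) x = x mod fst m * snd m + layout_fun L (x div fst m)"
proof -
  have "coord (m # L) x (Suc i) = coord L (x div fst m) i" for i
    by (simp add: coord_def shapes_def div_mult2_eq)
  then show ?thesis
    unfolding layout_fun_def
    by (simp only: length_Cons sum.lessThan_Suc_shift) (simp add: coord_def shapes_def strides_def)
qed

lemma layout_fun_image: "flat_layout L \<Longrightarrow> layout_fun L ` {..<lsize L} = offsets L"
proof (induction L)
  case Nil
  then show ?case by (auto simp: layout_fun_def)
next
  case (Cons m L)
  let ?P = "{..<fst m} \<times> {..<lsize L}"
  have "layout_fun (m # L) ` {..<lsize (m # L)} = layout_fun (m # L) ` (\<lambda>(a, y). a + fst m * y) ` ?P"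
    using image_add_mult_lessThan[of "fst m" "lsize L"] Cons.prems by simp
  also have "\<dots> = (\<lambda>(a, y). a * snd m + layout_fun L y) ` ?P"
    unfolding image_image by (intro image_cong) (auto simp: layout_fun_Cons)
  also have "\<dots> = cell m + layout_fun L ` {..<lsize L}"
    by (force simp: set_plus_image cell_def)
  finally show ?case using Cons by simp
qed

lemma compact_iff_offsets:
  assumes "flat_layout L"
  shows "compact L \<longleftrightarrow> offsets L = {..<lcosize L} \<and> card (offsets L) = lsize L"
  using inj_on_iff_eq_card[of "{..<lsize L}" "layout_fun L"]
  unfolding compact_def bij_betw_def atLeast0LessThan layout_fun_image[OF assms] by auto

lemma compact_mset:
  assumes "flat_layout L" "mset L = mset L'"
  shows "compact L \<longleftrightarrow> compact L'"
proof -
  have "flat_layout L'"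
    using assms by (metis flat_layout_def set_mset_mset)
  then show ?thesis
    using assms offsets_mset[OF assms(2)] lsize_mset[OF assms(2)] lcosize_mset[OF assms(2)]
    by (simp add: compact_iff_offsets)
qed

lemma compact_squeeze:
  assumes "flat_layout L"
  shows "compact (squeeze L) \<longleftrightarrow> compact L"
  using assms flat_layout_squeeze[OF assms]
  by (simp add: compact_iff_offsets offsets_squeeze lsize_squeeze lcosize_squeeze)

lemma compact_cong:
  assumes "flat_layout L" "flat_layout L'" "mset (squeeze L) = mset (squeeze L')"
  shows "compact L \<longleftrightarrow> compact L'"
  using compact_mset[OF flat_layout_squeeze[OF assms(1)] assms(3)]
  by (simp add: compact_squeeze assms(1,2))

section \<open>Compact layouts are column-major up to permutation\<close>

lemma card_offsets_eq_lsize_subset: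
  assumes "flat_layout L" "compact L" "mset xs \<subseteq># mset L"
  shows "card (offsets xs) = lsize xs"
proof -
  obtain ys where ys: "mset L = mset (xs @ ys)"
    using assms(3) by (metis ex_mset mset_append mset_subset_eq_exists_conv)
  have "flat_layout (xs @ ys)" "compact (xs @ ys)"
    using assms(1,2) ys compact_mset[OF assms(1) ys] by (simp_all add: flat_layout_def flip: set_mset_mset)
  then have "lsize xs * lsize ys = card (offsets xs + offsets ys)"
    by (metis compact_iff_offsets offsets_append lsize_append)
  also have "\<dots> \<le> card (offsets xs) * lsize ys"
    by (meson card_set_plus_le card_offsets_le finite_offsets mult_le_mono2 order_trans)
  finally have "lsize xs \<le> card (offsets xs)"
    using lsize_pos \<open>flat_layout (xs @ ys)\<close> by simp
  then show ?thesis
    using card_offsets_le le_antisym by blast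
qed

lemma offsets_ge_stride:
  assumes "v \<in> offsets L" "0 < v"
  shows "\<exists>m\<in>set L. 0 < snd m \<and> snd m \<le> v"
  using assms
proof (induction L arbitrary: v)
  case (Cons m L)
  then obtain a w where "a < fst m" "w \<in> offsets L" "v = a * snd m + w"
    by (auto simp: set_plus_def cell_def)
  then show ?case
    using Cons.IH[of w] Cons.prems(2) by (cases "w = 0") auto
qed simp

lemma compact_stride_pos:
  assumes "flat_layout L" "compact L" "m \<in> set L" "2 \<le> fst m"
  shows "0 < snd m"
proof (rule ccontr)
  assume "\<not> 0 < snd m"
  then have "offsets [m] = {0}"
    using assms(4) by (auto simp: cell_def image_constant_conv lessThan_empty_iff)
  moreover have "card (offsets [m]) = fst m"
    using card_offsets_eq_lsize_subset[OF assms(1,2), of "[m]"] assms(3) by simp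
  ultimately show False
    using assms(4) by simp
qed

lemma compact_stride_ge:
  assumes "flat_layout L" "compact L" "mset [(s1, 1), (s2, d)] \<subseteq># mset L" "2 \<le> s2"
  shows "s1 \<le> d"
proof (rule ccontr)
  assume "\<not> s1 \<le> d"
  have "offsets [(s1, 1), (s2, d)] \<subseteq> {..<s1 + (s2 - 1) * d}"
  proof
    fix v assume "v \<in> offsets [(s1, 1), (s2, d)]"
    then obtain a b where "a < s1" "b < s2" "v = a + b * d"
      by (auto simp: set_plus_def cell_def)
    moreover have "b * d \<le> (s2 - 1) * d"
      using \<open>b < s2\<close> by (intro mult_le_mono1) linarith
    ultimately show "v \<in> {..<s1 + (s2 - 1) * d}"
      unfolding lessThan_iff by linarith
  qed
  then have "card (offsets [(s1, 1), (s2, d)]) \<le> s1 + (s2 - 1) * d"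
    by (metis card_lessThan card_mono finite_lessThan)
  also have "\<dots> < s1 + (s2 - 1) * s1"
    using \<open>\<not> s1 \<le> d\<close> assms(4) by simp
  also have "\<dots> = lsize [(s1, 1), (s2, d)]"
    using assms(4) by (simp add: algebra_simps)
  finally show False
    using card_offsets_eq_lsize_subset[OF assms(1-3)] by simp
qed

lemma compact_unit_stride:
  assumes "compact L" "L \<noteq> []" "\<forall>m\<in>set L. 2 \<le> fst m"
  shows "\<exists>s. (s, 1) \<in> set L"
proof -
  have flat: "flat_layout L"
    using assms(3) by (auto simp: flat_layout_def)
  obtain m L' where L: "L = m # L'"
    using assms(2) by (cases L) auto
  have "0 < snd m"
    using compact_stride_pos[OF flat assms(1)] L assms(3) by simp
  then have "0 < (fst m - 1) * snd m"
    using assms(3) L by simp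
  then have "1 < lcosize L"
    using L by (simp add: lcosize_eq)
  then have "1 \<in> offsets L"
    using assms(1) flat by (simp add: compact_iff_offsets)
  then obtain m' where m': "m' \<in> set L" "0 < snd m'" "snd m' \<le> 1"
    using offsets_ge_stride[OF _ zero_less_one] by blast
  then have "snd m' = 1"
    by linarith
  with m' have "(fst m', 1) \<in> set L"
    by (metis prod.collapse)
  then show ?thesis ..
qed

lemma compact_next_stride:
  assumes "compact ((s1, 1) # L)" "L \<noteq> []" "\<forall>m\<in>set ((s1, 1) # L). 2 \<le> fst m"
  shows "\<exists>s2. (s2, s1) \<in> set L"
proof -
  have flat: "flat_layout ((s1, 1) # L)"
    using assms(3) by (auto simp: flat_layout_def)
  obtain m L' where L: "L = m # L'"
    using assms(2) by (cases L) auto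
  have "0 < snd m"
    using compact_stride_pos[OF flat assms(1), of m] L assms(3) by simp
  then have "0 < (fst m - 1) * snd m"
    using assms(3) L by simp
  then have "s1 < lcosize ((s1, 1) # L)"
    using assms(3) L by (simp add: lcosize_eq)
  then have "s1 \<in> cell (s1, 1) + offsets L"
    using assms(1) flat by (simp add: compact_iff_offsets)
  then obtain a w where "a < s1" "w \<in> offsets L" "s1 = a + w"
    by (auto simp: set_plus_def cell_def)
  then obtain m2 where m2: "m2 \<in> set L" "0 < snd m2" "snd m2 \<le> s1"
    using offsets_ge_stride[of w L] by auto
  have "s1 \<le> snd m2"
    using compact_stride_ge[OF flat assms(1), of s1 "fst m2" "snd m2"] m2(1) assms(3) by simp
  with m2 have "(fst m2, s1) \<in> set L"
    by (metis le_antisym prod.collapse)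
  then show ?thesis ..
qed

lemma cell_merge:
  assumes "0 < s1"
  shows "cell (s1, 1) + cell (s2, s1) = cell (s1 * s2, 1)"
proof -
  have "cell (s1, 1) + cell (s2, s1) = (\<lambda>(a, b). a + s1 * b) ` ({..<s1} \<times> {..<s2})"
    by (force simp: set_plus_image cell_def mult.commute)
  also have "\<dots> = {..<s1 * s2}"
    by (rule image_add_mult_lessThan[OF assms])
  finally show ?thesis
    by (simp add: cell_def)
qed

lemma compact_merge:
  assumes "0 < s1" "0 < s2" "flat_layout L"
  shows "compact ((s1, 1) # (s2, s1) # L) \<longleftrightarrow> compact ((s1 * s2, 1) # L)"
proof -
  have "offsets ((s1, 1) # (s2, s1) # L) = offsets ((s1 * s2, 1) # L)"
    using cell_merge[OF assms(1)] by (simp add: add.assoc[symmetric])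
  moreover have "lcosize ((s1, 1) # (s2, s1) # L) = lcosize ((s1 * s2, 1) # L)"
    using assms(1,2) by (cases s1; cases s2) (simp_all add: algebra_simps)
  ultimately show ?thesis
    using assms by (simp add: compact_iff_offsets mult.assoc)
qed

fun column_major :: "nat \<Rightarrow> layout \<Rightarrow> bool" where
  "column_major p [] \<longleftrightarrow> True"
| "column_major p (m # L) \<longleftrightarrow> snd m = p \<and> column_major (p * fst m) L"

lemma column_major_stride_ge:
  "column_major p C \<Longrightarrow> flat_layout C \<Longrightarrow> m \<in> set C \<Longrightarrow> p \<le> snd m"
proof (induction C arbitrary: p)
  case (Cons c C)
  show ?case
  proof (cases "m = c")
    case False
    then have "p * fst c \<le> snd m"
      using Cons by simp
    moreover have "p \<le> p * fst c"
      using Cons.prems(2) by simp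
    ultimately show ?thesis
      by (rule order_trans[rotated])
  qed (use Cons.prems in simp)
qed simp

lemma column_major_offsets:
  "column_major p C \<Longrightarrow> flat_layout C \<Longrightarrow> offsets C = (\<lambda>k. p * k) ` {..<lsize C}"
proof (induction C arbitrary: p)
  case (Cons c C)
  obtain s where c: "c = (s, p)" and "0 < s"
    using Cons.prems by (cases c) auto
  have "offsets (c # C) = cell (s, p) + (\<lambda>k. p * s * k) ` {..<lsize C}"
    using Cons by (simp add: c)
  also have "\<dots> = (\<lambda>x. p * x) ` (\<lambda>(a, k). a + s * k) ` ({..<s} \<times> {..<lsize C})"
    unfolding set_plus_image cell_def image_image
    by (force simp: algebra_simps)
  also have "\<dots> = (\<lambda>k. p * k) ` {..<lsize (c # C)}"
    using image_add_mult_lessThan[OF \<open>0 < s\<close>] by (simp add: c)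
  finally show ?case .
qed auto

lemma column_major_lcosize:
  "column_major p C \<Longrightarrow> flat_layout C \<Longrightarrow> lcosize C + p = p * lsize C + 1"
proof (induction C arbitrary: p)
  case (Cons c C)
  obtain s where c: "c = (s, p)" and "0 < s"
    using Cons.prems by (cases c) auto
  have "lcosize (c # C) + p = ((s - 1) * p + p) + lcosize C"
    by (simp add: c)
  also have "(s - 1) * p + p = p * s"
    using \<open>0 < s\<close> by (cases s) simp_all
  also have "p * s + lcosize C = p * lsize (c # C) + 1"
    using Cons.IH[of "p * s"] Cons.prems by (simp add: c mult.assoc add.commute)
  finally show ?case .
qed simp

lemma compact_if_column_major: "column_major 1 C \<Longrightarrow> flat_layout C \<Longrightarrow> compact C"
  using column_major_offsets[of 1 C] column_major_lcosize[of 1 C]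
  by (simp add: compact_iff_offsets)

lemma column_major_hd:
  assumes "column_major p C" "0 < p" "\<forall>m\<in>set C. 2 \<le> fst m" "(s, p) \<in> set C"
  shows "C = (s, p) # tl C"
proof (cases C)
  case (Cons c C')
  have "flat_layout C'"
    using assms(3) Cons by (fastforce simp: flat_layout_def)
  have "(s, p) \<notin> set C'"
  proof
    assume "(s, p) \<in> set C'"
    then have "p * fst c \<le> p"
      using column_major_stride_ge[of "p * fst c" C' "(s, p)"] assms(1) Cons \<open>flat_layout C'\<close>
      by simp
    then show False
      using assms(2,3) Cons by simp
  qed
  then show ?thesis
    using assms Cons by (cases c) auto
qed (use assms in simp)

lemma compact_unit_modes:
  assumes "compact L" "\<forall>m\<in>set L. 2 \<le> fst m" "L \<noteq> []"
  obtains s1 where "mset L = mset [(s1, 1)]"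
    | s1 s2 L1 where "mset L = mset ((s1, 1) # (s2, s1) # L1)"
proof -
  have flat: "flat_layout L"
    using assms(2) by (auto simp: flat_layout_def)
  obtain s1 where s1: "(s1, 1) \<in> set L"
    using compact_unit_stride assms by blast
  define L0 where "L0 = remove1 (s1, 1) L"
  have L0: "mset L = mset ((s1, 1) # L0)"
    using s1 by (simp add: L0_def)
  show ?thesis
  proof (cases "L0 = []")
    case False
    have "compact ((s1, 1) # L0)"
      using compact_mset[OF flat L0] assms(1) by simp
    moreover have "\<forall>m\<in>set ((s1, 1) # L0). 2 \<le> fst m"
      using assms(2) L0 by (metis set_mset_mset)
    ultimately obtain s2 where s2: "(s2, s1) \<in> set L0"
      using compact_next_stride False by blast
    have "mset L = mset ((s1, 1) # (s2, s1) # remove1 (s2, s1) L0)"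
      using L0 s2 by simp
    then show ?thesis
      by (rule that(2))
  qed (use L0 that(1) in simp)
qed

lemma column_major_perm_if_compact:
  assumes "compact L" "\<forall>m\<in>set L. 2 \<le> fst m"
  shows "\<exists>C. mset C = mset L \<and> column_major 1 C"
  using assms
proof (induction "length L" arbitrary: L rule: less_induct)
  case less
  show ?case
  proof (cases "L = []")
    case False
    show ?thesis
    proof (rule compact_unit_modes[OF less.prems False])
      fix s1 assume "mset L = mset [(s1, 1)]"
      then show ?thesis
        by (intro exI[of _ "[(s1, 1)]"]) simp
    next
      fix s1 s2 L1 assume L1: "mset L = mset ((s1, 1) # (s2, s1) # L1)"
      then have "set L = set ((s1, 1) # (s2, s1) # L1)"
        by (metis set_mset_mset)
      then have shapes: "2 \<le> s1" "2 \<le> s2" "\<forall>m\<in>set L1. 2 \<le> fst m"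
        using less.prems(2) by auto
      then have shapes': "\<forall>m\<in>set ((s1 * s2, 1) # L1). 2 \<le> fst m"
        using mult_le_mono[OF shapes(1,2)] by auto
      have "flat_layout L" "flat_layout L1"
        using less.prems(2) shapes(3) by (fastforce simp: flat_layout_def)+
      then have "compact ((s1 * s2, 1) # L1)"
        using compact_mset[OF _ L1] compact_merge[of s1 s2 L1] less.prems(1) shapes(1,2)
        by simp
      moreover have "length ((s1 * s2, 1) # L1) < length L"
        using arg_cong[OF L1, of size] by simp
      ultimately obtain C where C: "mset C = mset ((s1 * s2, 1) # L1)" "column_major 1 C"
        using less.hyps shapes' by blast
      have "set C = set ((s1 * s2, 1) # L1)"
        using C(1) by (metis set_mset_mset)
      then have "C = (s1 * s2, 1) # tl C"
        using column_major_hd[OF C(2) zero_less_one] shapes' by simp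
      then obtain C' where C': "C = (s1 * s2, 1) # C'"
        by blast
      have "column_major 1 ((s1, 1) # (s2, s1) # C')"
        using C(2) by (simp add: C')
      moreover have "mset ((s1, 1) # (s2, s1) # C') = mset L"
        using C(1) by (simp add: C' L1)
      ultimately show ?thesis
        by blast
    qed
  qed simp
qed

section \<open>Divisibility chains\<close>

fun stride_chain :: "nat \<Rightarrow> layout \<Rightarrow> nat \<Rightarrow> bool" where
  "stride_chain p [] N \<longleftrightarrow> p dvd N"
| "stride_chain p (m # L) N \<longleftrightarrow> p dvd snd m \<and> stride_chain (fst m * snd m) L N"

lemma stride_chain_dvd_mono: "stride_chain q L N \<Longrightarrow> p dvd q \<Longrightarrow> stride_chain p L N"
  by (cases L) (auto intro: dvd_trans)

lemma stride_chain_pos: "stride_chain p L N \<Longrightarrow> 0 < N \<Longrightarrow> 0 < p"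
proof (induction L arbitrary: p)
  case (Cons m L)
  have "0 < snd m"
    using Cons.IH[of "fst m * snd m"] Cons.prems by simp
  then show ?case
    using Cons.prems(1) by (cases p) auto
qed (auto intro!: gr0I)

lemma stride_chain_Cons_iff:
  "stride_chain p (m # L) N \<longleftrightarrow> p dvd snd m
     \<and> (\<forall>i. Suc i < length (m # L) \<longrightarrow>
          fst ((m # L) ! i) * snd ((m # L) ! i) dvd snd ((m # L) ! Suc i))
     \<and> fst (last (m # L)) * snd (last (m # L)) dvd N"
proof (induction L arbitrary: p m)
  case (Cons m' L)
  then show ?case
    by (simp add: All_less_Suc2)
qed simp

lemma complementable_iff_stride_chain:
  "complementable N A \<longleftrightarrow> stride_chain 1 (sort_layout (squeeze A)) N"
proof (cases "sort_layout (squeeze A)")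
  case Nil
  then show ?thesis
    by (simp add: complementable_def)
next
  case (Cons m L)
  then show ?thesis
    unfolding complementable_def Let_def Cons stride_chain_Cons_iff by (simp add: last_conv_nth)
qed

lemma sorted_strides_sort_layout: "sorted (map snd (sort_layout L))"
proof -
  have "sorted (map (\<lambda>(s, d). (d, s)) (sort_layout L))"
    by (simp add: sort_layout_def)
  then have "sorted (map fst (map (\<lambda>(s, d). (d, s)) (sort_layout L)))"
    by (rule sorted_map_mono) (auto simp: mono_on_def less_eq_prod_def)
  then show ?thesis
    by (simp add: case_prod_beta comp_def)
qed

lemma subset_mset_add_mset_notin: "A \<subseteq># add_mset c B \<Longrightarrow> c \<notin># A \<Longrightarrow> A \<subseteq># B"
  by (metis add_mset_add_single diff_single_trivial subset_eq_diff_conv)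

lemma stride_chain_if_column_major:
  assumes "column_major p C" "0 < p" "\<forall>m\<in>set C. 2 \<le> fst m"
    "sorted (map snd L)" "mset L \<subseteq># mset C"
  shows "stride_chain p L (p * lsize C)"
  using assms
proof (induction C arbitrary: p L)
  case (Cons c C)
  have c: "snd c = p" "column_major (p * fst c) C" "0 < p * fst c" "\<forall>m\<in>set C. 2 \<le> fst m"
    using Cons.prems by auto
  have flat_C: "flat_layout C"
    using c(4) by (fastforce simp: flat_layout_def)
  show ?case
  proof (cases L)
    case (Cons l L')
    show ?thesis
    proof (cases "l = c")
      case True
      then have "stride_chain (p * fst c) L' (p * fst c * lsize C)"
        using Cons.IH[OF c(2,3,4)] Cons.prems(4,5) \<open>L = l # L'\<close> by simp
      then show ?thesis
        using True c(1) \<open>L = l # L'\<close> by (simp add: mult.commute mult.left_commute)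
    next
      case False
      then have "l \<in> set C"
        using Cons.prems(5) \<open>L = l # L'\<close> by (auto dest: mset_subset_eqD)
      then have "p * fst c \<le> snd l"
        using column_major_stride_ge[OF c(2) flat_C] by blast
      moreover have "p < p * fst c"
        using c(3,4) Cons.prems(3) by simp
      ultimately have "p < snd l"
        by linarith
      then have "\<forall>m\<in>set L. p < snd m"
        using Cons.prems(4) \<open>L = l # L'\<close> by (auto intro: order_less_le_trans)
      then have "c \<notin> set L"
        using c(1) by blast
      then have "mset L \<subseteq># mset C"
        using Cons.prems(5) by (simp add: subset_mset_add_mset_notin)
      then have "stride_chain (p * fst c) L (p * fst c * lsize C)"
        using Cons.IH[OF c(2,3,4) Cons.prems(4)] by blast
      then have "stride_chain p L (p * fst c * lsize C)"
        by (rule stride_chain_dvd_mono) simp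
      then show ?thesis
        by (simp add: mult.assoc)
    qed
  qed simp
qed simp

lemma stride_chain_if_compact:
  assumes "flat_layout A" "flat_layout B" "compact (A @ B)"
  shows "stride_chain 1 (sort_layout (squeeze A)) (lsize A * lsize B)"
proof -
  let ?M = "squeeze (A @ B)"
  have shapes: "\<forall>m\<in>set ?M. 2 \<le> fst m"
    using assms(1,2) by (fastforce simp: squeeze_def flat_layout_def)
  have "compact ?M"
    using assms compact_squeeze by simp
  then obtain C where C: "mset C = mset ?M" "column_major 1 C"
    using column_major_perm_if_compact shapes by blast
  have "lsize C = lsize A * lsize B"
    using lsize_mset[OF C(1)] by (simp add: lsize_squeeze lsize_append)
  moreover have "mset (sort_layout (squeeze A)) \<subseteq># mset C"
    using C(1) by (simp add: sort_layout_def squeeze_def)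
  moreover have "\<forall>m\<in>set C. 2 \<le> fst m"
    using C(1) shapes by (metis set_mset_mset)
  ultimately show ?thesis
    using stride_chain_if_column_major[OF C(2)] sorted_strides_sort_layout by simp
qed

section \<open>Complements\<close>

fun gap_modes :: "nat \<Rightarrow> layout \<Rightarrow> nat \<Rightarrow> layout" where
  "gap_modes p [] N = [(N div p, p)]"
| "gap_modes p (m # L) N = (snd m div p, p) # gap_modes (fst m * snd m) L N"

fun fill_gaps :: "nat \<Rightarrow> layout \<Rightarrow> nat \<Rightarrow> layout" where
  "fill_gaps p [] N = [(N div p, p)]"
| "fill_gaps p (m # L) N = (snd m div p, p) # m # fill_gaps (fst m * snd m) L N"

lemma mset_fill_gaps: "mset (fill_gaps p L N) = mset L + mset (gap_modes p L N)"
  by (induction L arbitrary: p) auto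

lemma set_gap_modes_subset: "set (gap_modes p L N) \<subseteq> set (fill_gaps p L N)"
  by (induction L arbitrary: p) auto

lemma column_major_fill_gaps: "stride_chain p L N \<Longrightarrow> column_major p (fill_gaps p L N)"
  by (induction L arbitrary: p) (auto simp: mult.commute)

lemma lsize_fill_gaps: "stride_chain p L N \<Longrightarrow> p * lsize (fill_gaps p L N) = N"
proof (induction L arbitrary: p)
  case (Cons m L)
  let ?R = "lsize (fill_gaps (fst m * snd m) L N)"
  have "p * lsize (fill_gaps p (m # L) N) = p * (snd m div p) * (fst m * ?R)"
    by (simp add: mult.assoc)
  also have "\<dots> = fst m * snd m * ?R"
    using Cons.prems by (simp add: dvd_mult_div_cancel)
  also have "\<dots> = N"
    using Cons by simp
  finally show ?case .
qed simp

lemma flat_layout_fill_gaps: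
  "stride_chain p L N \<Longrightarrow> 0 < N \<Longrightarrow> flat_layout L \<Longrightarrow> flat_layout (fill_gaps p L N)"
proof (induction L arbitrary: p)
  case Nil
  then have "0 < p"
    using stride_chain_pos by blast
  then show ?case
    using Nil by (auto simp: div_greater_zero_iff dvd_imp_le)
next
  case (Cons m L)
  have "0 < fst m * snd m" "0 < p"
    using stride_chain_pos[of "fst m * snd m" L N] stride_chain_pos[of p "m # L" N] Cons.prems
    by simp_all
  then have "0 < snd m div p"
    using Cons.prems(1) by (auto simp: div_greater_zero_iff dvd_imp_le)
  then show ?case
    using Cons by simp
qed

lemma complement_if_stride_chain:
  assumes "flat_layout A" "0 < N" "stride_chain 1 (sort_layout (squeeze A)) N"
  shows "is_complement N A (gap_modes 1 (sort_layout (squeeze A)) N)"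
proof -
  define L where "L = sort_layout (squeeze A)"
  define B where "B = gap_modes 1 L N"
  define F where "F = fill_gaps 1 L N"
  have mset_L: "mset L = mset (squeeze A)"
    by (simp add: L_def sort_layout_def)
  have "flat_layout L"
    using assms(1) mset_L by (metis flat_layout_squeeze flat_layout_def set_mset_mset)
  then have flat_F: "flat_layout F"
    using flat_layout_fill_gaps assms(2,3) by (simp add: F_def L_def)
  then have flat_B: "flat_layout B"
    using set_gap_modes_subset by (fastforce simp: flat_layout_def B_def F_def)
  have mset_F: "mset F = mset L + mset B"
    by (simp add: F_def B_def mset_fill_gaps)
  have "compact F"
    using compact_if_column_major column_major_fill_gaps assms(3) flat_F by (simp add: F_def L_def)
  moreover have "mset (squeeze (A @ B)) = mset (squeeze F)"
    using mset_F mset_L by (simp add: squeeze_def filter_filter_mset)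
  ultimately have "compact (A @ B)"
    using compact_cong[of "A @ B" F] assms(1) flat_B flat_F by simp
  moreover have "lsize A * lsize B = N"
    using lsize_fill_gaps[OF assms(3)] lsize_mset[of F "L @ B"] lsize_mset[OF mset_L] mset_F
    by (simp add: F_def L_def lsize_append lsize_squeeze)
  ultimately show ?thesis
    using flat_B by (simp add: is_complement_def concat_layout_def B_def L_def)
qed

theorem mainTheorem14:
  fixes A :: layout and N :: nat
  assumes "flat_layout A" and "N > 0"
  shows "(\<exists>B. is_complement N A B) \<longleftrightarrow> complementable N A"
proof
  assume "\<exists>B. is_complement N A B"
  then obtain B where "flat_layout B" "compact (A @ B)" "lsize A * lsize B = N"
    by (auto simp: is_complement_def concat_layout_def)
  then show "complementable N A"
    using stride_chain_if_compact assms(1) by (auto simp: complementable_iff_stride_chain)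
next
  assume "complementable N A"
  then show "\<exists>B. is_complement N A B"
    using complement_if_stride_chain assms by (auto simp: complementable_iff_stride_chain)
qed

end
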